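(* In the setting of the context (no depth assumption), for every $n\geq1$ the following hold: (i) $M_{n-1}$ is a free right $M_{n-2}$-module with a basis contained in $C_{M_{n-1}}(N)$ if and only if there exist orthogonal dual bases for $E_{M_{n-2}}$ contained in $C_{M_{n-1}}(N)$; (ii) $M_n$ is a free right $M_{n-1}$-module with a basis contained in $C_{M_n}(M)$ if and only if there exist orthogonal dual bases for $E_{M_{n-1}}$ contained in $C_{M_n}(M)$.
   Context: $k$ is a field; $C_R(S)=\{r\in R:rs=sr\ \forall s\in S\}$. $N\subseteq M$ is a strongly separable, irreducible extension of $k$-algebras: $C_M(N)=k1$ and there are an $N$-bimodule map $E:M\to N$ and $x_1,\dots,x_n,y_1,\dots,y_n\in M$ with $\sum_iE(mx_i)y_i=m=\sum_ix_iE(y_im)$ for all $m\in M$, $E(1)\neq0$, $\sum_ix_iy_i\neq0$; normalized so that $E(1)=1$, whence $\sum_ix_iy_i=\lambda^{-1}1$ with $0\neq\lambda\in k$. Basic construction: given $S\subseteq R$, an $S$-bimodule map $E_S:R\to S$ with $E_S(1)=1$ and $r_i,s_i\in R$ with $\sum_iE_S(rr_i)s_i=r=\sum_ir_iE_S(s_ir)$ and $\sum_ir_is_i=\lambda^{-1}1$, set $R_1=R\otimes_SR$ with product $(a\otimes b)(c\otimes d)=aE_S(bc)\otimes d$, unit $\sum_ir_i\otimes s_i$, $R\subseteq R_1$ via $r\mapsto\sum_irr_i\otimes s_i$, and $E_R:R_1\to R$, $a\otimes b\mapsto\lambda ab$; then $E_R$ with $\lambda^{-1}r_i\otimes1$,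 $1\otimes s_i$ satisfy the same conditions with the same $\lambda$. Jones tower: $M_{-1}=N$, $M_0=M$, $E_{M_{-1}}=E$, and inductively $M_n$ with $E_{M_{n-1}}:M_n\to M_{n-1}$ is the basic construction of $(M_{n-2}\subseteq M_{n-1},E_{M_{n-2}})$. For an $S$-bimodule map $G:R\to S$, orthogonal dual bases for $G$ are finite families $\{z_i\},\{w_i\}$ in $R$ with $G(w_iz_j)=\delta_{ij}$ and $\sum_iz_iG(w_ix)=x=\sum_iG(xz_i)w_i$ for all $x\in R$. *)

theory Defs
  imports Main
begin

text \<open>All algebras of the Jones tower are realised as k-subalgebras of one ambient
 unital k-algebra (type 'a with scalar multiplication sc by the field 'k); the inclusions
 M_{n-1} into M_n become set inclusions (ambient = direct limit of the tower).\<close>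

definition kalg :: "('k::field \<Rightarrow> 'a::ring_1 \<Rightarrow> 'a) \<Rightarrow> bool" where
  "kalg sc \<longleftrightarrow>
     (\<forall>c a b. sc c (a + b) = sc c a + sc c b) \<and>
     (\<forall>c d a. sc (c + d) a = sc c a + sc d a) \<and>
     (\<forall>c d a. sc (c * d) a = sc c (sc d a)) \<and>
     (\<forall>a. sc 1 a = a) \<and>
     (\<forall>c a b. sc c (a * b) = sc c a * b \<and> sc c (a * b) = a * sc c b)"

definition subalg :: "('k::field \<Rightarrow> 'a::ring_1 \<Rightarrow> 'a) \<Rightarrow> 'a set \<Rightarrow> bool" where
  "subalg sc A \<longleftrightarrow> 0 \<in> A \<and> 1 \<in> A \<and>
     (\<forall>a\<in>A. \<forall>b\<in>A. a + b \<in> A \<and> a * b \<in> A) \<and>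
     (\<forall>a\<in>A. - a \<in> A) \<and> (\<forall>c. \<forall>a\<in>A. sc c a \<in> A)"

definition centr :: "'a::ring_1 set \<Rightarrow> 'a set \<Rightarrow> 'a set" where
  "centr R X = {r \<in> R. \<forall>s\<in>X. r * s = s * r}"

definition bimod_map :: "'a::ring_1 set \<Rightarrow> 'a set \<Rightarrow> ('a \<Rightarrow> 'a) \<Rightarrow> bool" where
  "bimod_map S R E \<longleftrightarrow> (\<forall>x\<in>R. E x \<in> S) \<and>
     (\<forall>x\<in>R. \<forall>y\<in>R. E (x + y) = E x + E y) \<and>
     (\<forall>s\<in>S. \<forall>x\<in>R. E (s * x) = s * E x \<and> E (x * s) = E x * s)"

definition sep_data :: "('k::field \<Rightarrow> 'a::ring_1 \<Rightarrow> 'a) \<Rightarrow> 'a set \<Rightarrow> 'a set \<Rightarrow> ('a \<Rightarrow> 'a)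
    \<Rightarrow> 'k \<Rightarrow> nat \<Rightarrow> (nat \<Rightarrow> 'a) \<Rightarrow> (nat \<Rightarrow> 'a) \<Rightarrow> bool" where
  "sep_data sc S R E lam n x y \<longleftrightarrow> bimod_map S R E \<and>
     (\<forall>i<n. x i \<in> R \<and> y i \<in> R) \<and>
     (\<forall>m\<in>R. (\<Sum>i<n. E (m * x i) * y i) = m \<and> (\<Sum>i<n. x i * E (y i * m)) = m) \<and>
     E 1 = 1 \<and> lam \<noteq> 0 \<and> (\<Sum>i<n. x i * y i) = sc (inverse lam) 1"

text \<open>Finitely supported formal k-linear combinations of pairs in R \<times> R.\<close>
definition fsupp_on :: "'a set \<Rightarrow> ('a \<times> 'a \<Rightarrow> 'k::zero) \<Rightarrow> bool" where
  "fsupp_on R f \<longleftrightarrow> finite {p. f p \<noteq> 0} \<and> {p. f p \<noteq> 0} \<subseteq> R \<times> R"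

definition lin_ext :: "('k::field \<Rightarrow> 'a::ring_1 \<Rightarrow> 'a) \<Rightarrow> ('a \<Rightarrow> 'a \<Rightarrow> 'a) \<Rightarrow> ('a \<times> 'a \<Rightarrow> 'k) \<Rightarrow> 'a" where
  "lin_ext sc \<mu> f = (\<Sum>p\<in>{p. f p \<noteq> 0}. sc (f p) (\<mu> (fst p) (snd p)))"

definition delta :: "'b \<Rightarrow> 'b \<Rightarrow> 'k::field" where
  "delta p q = (if q = p then 1 else 0)"

text \<open>The k-span of the relations defining R \<otimes>_S R inside the free k-space on R \<times> R.\<close>
inductive_set trel :: "('k::field \<Rightarrow> 'a::ring_1 \<Rightarrow> 'a) \<Rightarrow> 'a set \<Rightarrow> 'a set \<Rightarrow> ('a \<times> 'a \<Rightarrow> 'k) set"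
  for sc :: "'k::field \<Rightarrow> 'a::ring_1 \<Rightarrow> 'a" and S :: "'a set" and R :: "'a set" where
  zero: "(\<lambda>_. 0) \<in> trel sc S R"
| add: "f \<in> trel sc S R \<Longrightarrow> g \<in> trel sc S R \<Longrightarrow> (\<lambda>p. f p + g p) \<in> trel sc S R"
| smult: "f \<in> trel sc S R \<Longrightarrow> (\<lambda>p. c * f p) \<in> trel sc S R"
| addl: "a \<in> R \<Longrightarrow> a' \<in> R \<Longrightarrow> b \<in> R \<Longrightarrow>
     (\<lambda>p. delta (a + a', b) p - delta (a, b) p - delta (a', b) p) \<in> trel sc S R"
| addr: "a \<in> R \<Longrightarrow> b \<in> R \<Longrightarrow> b' \<in> R \<Longrightarrow>
     (\<lambda>p. delta (a, b + b') p - delta (a, b) p - delta (a, b') p) \<in> trel sc S R"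
| scl: "a \<in> R \<Longrightarrow> b \<in> R \<Longrightarrow> (\<lambda>p. delta (sc c a, b) p - c * delta (a, b) p) \<in> trel sc S R"
| scr: "a \<in> R \<Longrightarrow> b \<in> R \<Longrightarrow> (\<lambda>p. delta (a, sc c b) p - c * delta (a, b) p) \<in> trel sc S R"
| bal: "a \<in> R \<Longrightarrow> b \<in> R \<Longrightarrow> s \<in> S \<Longrightarrow>
     (\<lambda>p. delta (a * s, b) p - delta (a, s * b) p) \<in> trel sc S R"

text \<open>R1 with E_R is (isomorphic, via a \<otimes> b \<mapsto> mu a b, to) the basic construction
  R \<otimes>_S R of (S \<subseteq> R, E_S), with R \<subseteq> R1 via r \<mapsto> \<Sum> r r_i \<otimes> s_i.\<close>
definition basic_constr :: "('k::field \<Rightarrow> 'a::ring_1 \<Rightarrow> 'a) \<Rightarrow> 'k \<Rightarrow> 'a set \<Rightarrow> 'a set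
    \<Rightarrow> ('a \<Rightarrow> 'a) \<Rightarrow> 'a set \<Rightarrow> ('a \<Rightarrow> 'a) \<Rightarrow> ('a \<Rightarrow> 'a \<Rightarrow> 'a) \<Rightarrow> bool" where
  "basic_constr sc lam S R ES R1 ER \<mu> \<longleftrightarrow>
     subalg sc R1 \<and> R \<subseteq> R1 \<and>
     (\<exists>n x y. sep_data sc S R ES lam n x y \<and> (\<forall>r\<in>R. r = (\<Sum>i<n. \<mu> (r * x i) (y i)))) \<and>
     (\<forall>a\<in>R. \<forall>b\<in>R. \<mu> a b \<in> R1) \<and>
     (\<forall>f. fsupp_on R f \<longrightarrow> (lin_ext sc \<mu> f = 0 \<longleftrightarrow> f \<in> trel sc S R)) \<and>
     (\<forall>z\<in>R1. \<exists>f. fsupp_on R f \<and> z = lin_ext sc \<mu> f) \<and>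
     (\<forall>a\<in>R. \<forall>b\<in>R. \<forall>c\<in>R. \<forall>d\<in>R. \<mu> a b * \<mu> c d = \<mu> (a * ES (b * c)) d) \<and>
     (\<forall>z\<in>R1. \<forall>z'\<in>R1. ER (z + z') = ER z + ER z') \<and>
     (\<forall>c. \<forall>z\<in>R1. ER (sc c z) = sc c (ER z)) \<and>
     (\<forall>a\<in>R. \<forall>b\<in>R. ER (\<mu> a b) = sc lam (a * b))"

text \<open>Jones tower, shifted by one: T 0 = M_{-1} = N, T (j+1) = M_j, EE j = E_{M_{j-1}} : T (j+1) \<rightarrow> T j.\<close>
definition jones_tower :: "('k::field \<Rightarrow> 'a::ring_1 \<Rightarrow> 'a) \<Rightarrow> 'k \<Rightarrow> 'a set \<Rightarrow> 'a set \<Rightarrow> ('a \<Rightarrow> 'a)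
    \<Rightarrow> (nat \<Rightarrow> 'a set) \<Rightarrow> (nat \<Rightarrow> 'a \<Rightarrow> 'a) \<Rightarrow> bool" where
  "jones_tower sc lam N M E T EE \<longleftrightarrow> T 0 = N \<and> T (Suc 0) = M \<and> EE 0 = E \<and>
     (\<forall>j. \<exists>\<mu>. basic_constr sc lam (T j) (T (Suc j)) (EE j) (T (Suc (Suc j))) (EE (Suc j)) \<mu>)"

definition free_right_basis :: "'a::ring_1 set \<Rightarrow> 'a set \<Rightarrow> 'a set \<Rightarrow> bool" where
  "free_right_basis S R B \<longleftrightarrow> B \<subseteq> R \<and>
     (\<forall>r\<in>R. \<exists>!c. (\<forall>b. b \<notin> B \<longrightarrow> c b = 0) \<and> (\<forall>b\<in>B. c b \<in> S) \<and>
        finite {b\<in>B. c b \<noteq> 0} \<and> r = (\<Sum>b\<in>{b\<in>B. c b \<noteq> 0}. b * c b))"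

definition odb :: "'a::ring_1 set \<Rightarrow> ('a \<Rightarrow> 'a) \<Rightarrow> nat \<Rightarrow> (nat \<Rightarrow> 'a) \<Rightarrow> (nat \<Rightarrow> 'a) \<Rightarrow> bool" where
  "odb R G m z w \<longleftrightarrow> (\<forall>i<m. z i \<in> R \<and> w i \<in> R) \<and>
     (\<forall>i<m. \<forall>j<m. G (w i * z j) = (if i = j then 1 else 0)) \<and>
     (\<forall>x\<in>R. (\<Sum>i<m. z i * G (w i * x)) = x \<and> (\<Sum>i<m. G (x * z i) * w i) = x)"

end

theory Submission
  imports Defs
begin

text \<open>Both parts are instances of one fact about a strongly separable extension S \<subseteq> R with
  expectation G and a subset X \<subseteq> S (take M_{n-2} \<subseteq> M_{n-1} with X = N, and M_{n-1} \<subseteq> M_n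
  with X = M).
  Orthogonal dual bases z_i, w_i make {z_i} a free basis, the coefficient of r at z_i being
  G(w_i r). Conversely, for a free basis B expand the x_i of the separability data as
  x_i = \<Sum>_b b c_ib and put w_b = \<Sum>_i c_ib y_i. Then r = \<Sum>_b b G(w_b r), and uniqueness of
  coefficients shows that B is finite, that G(w_b b') = \<delta>_bb', and that G(w_b t r) = t G(w_b r)
  whenever t commutes with B. Since u \<mapsto> G(u \<cdot>) is injective on R by the other half of the
  separability data, the last identity makes w_b commute with X, and the same injectivity
  yields the second expansion \<Sum>_b G(r b) w_b = r.\<close>

lemma subalg_sum: "subalg sc A \<Longrightarrow> (\<And>i. i \<in> I \<Longrightarrow> f i \<in> A) \<Longrightarrow> sum f I \<in> A"
  by (induction I rule: infinite_finite_induct) (auto simp: subalg_def)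

lemma free_right_basis_coeff_unique:
  assumes basis: "free_right_basis S R B" and "0 \<in> S"
    and F: "finite F" "F \<subseteq> B" and c: "\<And>b. b \<in> F \<Longrightarrow> c b \<in> S" and d: "\<And>b. b \<in> F \<Longrightarrow> d b \<in> S"
    and r: "r = (\<Sum>b\<in>F. b * c b)" "r = (\<Sum>b\<in>F. b * d b)" "r \<in> R" and "b \<in> F"
  shows "c b = d b"
proof -
  define P where "P e \<longleftrightarrow> (\<forall>b. b \<notin> B \<longrightarrow> e b = 0) \<and> (\<forall>b\<in>B. e b \<in> S) \<and>
      finite {b\<in>B. e b \<noteq> 0} \<and> r = (\<Sum>b\<in>{b\<in>B. e b \<noteq> 0}. b * e b)" for e
  have unique: "\<exists>!e. P e" using basis r(3) unfolding free_right_basis_def P_def by blast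
  have P_extend: "P (\<lambda>b. if b \<in> F then e b else 0)"
    if "\<And>b. b \<in> F \<Longrightarrow> e b \<in> S" "r = (\<Sum>b\<in>F. b * e b)" for e
  proof -
    let ?e = "\<lambda>b. if b \<in> F then e b else 0"
    have supp: "{b\<in>B. ?e b \<noteq> 0} \<subseteq> F" by auto
    have "(\<Sum>b\<in>{b\<in>B. ?e b \<noteq> 0}. b * ?e b) = (\<Sum>b\<in>F. b * e b)"
      by (rule sum.mono_neutral_cong_left[OF F(1) supp]) (use F(2) in auto)
    then show ?thesis
      unfolding P_def using that F(2) \<open>0 \<in> S\<close> finite_subset[OF supp F(1)] by auto
  qed
  have "(\<lambda>b. if b \<in> F then c b else 0) = (\<lambda>b. if b \<in> F then d b else 0)"
    using unique P_extend[OF c r(1)] P_extend[OF d r(2)] by blast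
  then show ?thesis using \<open>b \<in> F\<close> by meson
qed

lemma free_right_basis_finiteI:
  assumes "finite B" "B \<subseteq> R" "0 \<in> S"
    and coeff: "\<And>r. r \<in> R \<Longrightarrow>
      \<exists>!c. (\<forall>b. b \<notin> B \<longrightarrow> c b = 0) \<and> (\<forall>b\<in>B. c b \<in> S) \<and> r = (\<Sum>b\<in>B. b * c b)"
  shows "free_right_basis S R B"
  unfolding free_right_basis_def
proof (intro conjI ballI)
  fix r assume "r \<in> R"
  have "(\<Sum>b\<in>{b\<in>B. c b \<noteq> 0}. b * c b) = (\<Sum>b\<in>B. b * c b)" for c :: "'a \<Rightarrow> 'a"
    by (rule sum.mono_neutral_left) (use \<open>finite B\<close> in auto)
  then show "\<exists>!c. (\<forall>b. b \<notin> B \<longrightarrow> c b = 0) \<and> (\<forall>b\<in>B. c b \<in> S) \<and>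
      finite {b\<in>B. c b \<noteq> 0} \<and> r = (\<Sum>b\<in>{b\<in>B. c b \<noteq> 0}. b * c b)"
    using coeff[OF \<open>r \<in> R\<close>] \<open>finite B\<close> by simp
qed (use assms in simp)

lemma odb_of_finite_family:
  assumes "finite B" "B \<subseteq> R" "\<And>b. b \<in> B \<Longrightarrow> wb b \<in> R"
    and "\<And>b b'. b \<in> B \<Longrightarrow> b' \<in> B \<Longrightarrow> G (wb b * b') = (if b = b' then 1 else 0)"
    and "\<And>a. a \<in> R \<Longrightarrow> (\<Sum>b\<in>B. b * G (wb b * a)) = a"
    and "\<And>a. a \<in> R \<Longrightarrow> (\<Sum>b\<in>B. G (a * b) * wb b) = a"
  obtains h where "bij_betw h {..<card B} B" "odb R G (card B) h (\<lambda>i. wb (h i))"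
proof -
  obtain h where h: "bij_betw h {..<card B} B"
    using ex_bij_betw_nat_finite[OF \<open>finite B\<close>] by (auto simp: atLeast0LessThan)
  have h_B: "h i \<in> B" if "i < card B" for i
    using h that by (auto simp: bij_betw_def)
  have h_eq_iff: "h i = h j \<longleftrightarrow> i = j" if "i < card B" "j < card B" for i j
    using h that by (auto simp: bij_betw_def inj_on_eq_iff)
  have reindex: "(\<Sum>i<card B. f (h i)) = (\<Sum>b\<in>B. f b)" for f :: "'a \<Rightarrow> 'b::comm_monoid_add"
    by (rule sum.reindex_bij_betw[OF h])
  have "odb R G (card B) h (\<lambda>i. wb (h i))"
    unfolding odb_def reindex[of "\<lambda>b. b * G (wb b * _)"] reindex[of "\<lambda>b. G (_ * b) * wb b"]
    using assms h_B h_eq_iff by auto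
  with h show thesis by (rule that)
qed

locale separable_extension =
  fixes sc :: "'k::field \<Rightarrow> 'a::ring_1 \<Rightarrow> 'a" and S R :: "'a set" and G :: "'a \<Rightarrow> 'a"
    and lam :: 'k and k :: nat and x y :: "nat \<Rightarrow> 'a"
  assumes subalg_S: "subalg sc S" and subalg_R: "subalg sc R" and S_subset_R: "S \<subseteq> R"
    and sep: "sep_data sc S R G lam k x y"
begin

lemma zero_S: "0 \<in> S" and one_S: "1 \<in> S"
  and mult_S: "a \<in> S \<Longrightarrow> b \<in> S \<Longrightarrow> a * b \<in> S"
  and mult_R: "a \<in> R \<Longrightarrow> b \<in> R \<Longrightarrow> a * b \<in> R"
  using subalg_S subalg_R by (auto simp: subalg_def)

lemma G_in_S: "a \<in> R \<Longrightarrow> G a \<in> S"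
  and G_add: "a \<in> R \<Longrightarrow> b \<in> R \<Longrightarrow> G (a + b) = G a + G b"
  and G_mult_left: "s \<in> S \<Longrightarrow> a \<in> R \<Longrightarrow> G (s * a) = s * G a"
  and G_mult_right: "s \<in> S \<Longrightarrow> a \<in> R \<Longrightarrow> G (a * s) = G a * s"
  using sep by (auto simp: sep_data_def bimod_map_def)

lemma x_in_R: "i < k \<Longrightarrow> x i \<in> R" and y_in_R: "i < k \<Longrightarrow> y i \<in> R"
  and sep_expansion_left: "r \<in> R \<Longrightarrow> (\<Sum>i<k. G (r * x i) * y i) = r"
  and sep_expansion_right: "r \<in> R \<Longrightarrow> (\<Sum>i<k. x i * G (y i * r)) = r"
  using sep by (auto simp: sep_data_def)

lemma G_sum: "(\<And>i. i \<in> I \<Longrightarrow> f i \<in> R) \<Longrightarrow> G (sum f I) = (\<Sum>i\<in>I. G (f i))"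
proof (induction I rule: infinite_finite_induct)
  case (insert i I)
  then have "f i \<in> R" "sum f I \<in> R" by (auto intro: subalg_sum[OF subalg_R])
  with insert show ?case by (simp add: G_add)
qed (use G_mult_left[OF zero_S, of 0] subalg_R in \<open>auto simp: subalg_def\<close>)

lemma eq_if_G_mult_right_eq:
  assumes "u \<in> R" "v \<in> R" "\<And>r. r \<in> R \<Longrightarrow> G (u * r) = G (v * r)"
  shows "u = v"
proof -
  have "u = (\<Sum>i<k. G (u * x i) * y i)" using sep_expansion_left \<open>u \<in> R\<close> by simp
  also have "\<dots> = (\<Sum>i<k. G (v * x i) * y i)" using assms(3) x_in_R by simp
  also have "\<dots> = v" using sep_expansion_left \<open>v \<in> R\<close> by simp
  finally show ?thesis .
qed

lemma odb_coeff:
  assumes odb: "odb R G m z w" and "j < m" and c: "\<And>i. i < m \<Longrightarrow> c i \<in> S"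
  shows "G (w j * (\<Sum>i<m. z i * c i)) = c j"
proof -
  have z_R: "z i \<in> R" and w_R: "w i \<in> R" if "i < m" for i
    using odb that by (auto simp: odb_def)
  have "G (w j * (\<Sum>i<m. z i * c i)) = (\<Sum>i<m. G (w j * z i * c i))"
    using \<open>j < m\<close> c z_R w_R S_subset_R
    by (auto simp: sum_distrib_left mult.assoc intro!: G_sum mult_R)
  also have "\<dots> = (\<Sum>i<m. G (w j * z i) * c i)"
    using \<open>j < m\<close> c z_R w_R by (simp add: G_mult_right mult_R)
  also have "\<dots> = c j"
    using odb \<open>j < m\<close> by (simp add: odb_def if_distrib[of "\<lambda>t. t * _"] cong: if_cong)
  finally show ?thesis .
qed

lemma odb_imp_free_right_basis:
  assumes odb: "odb R G m z w"
  shows "free_right_basis S R (z ` {..<m})"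
proof (rule free_right_basis_finiteI)
  have z_R: "z i \<in> R" if "i < m" for i using odb that by (simp add: odb_def)
  have expansion: "(\<Sum>i<m. z i * G (w i * r)) = r" if "r \<in> R" for r
    using odb that by (simp add: odb_def)
  have orth: "G (w i * z j) = (if i = j then 1 else 0)" if "i < m" "j < m" for i j
    using odb that by (simp add: odb_def)
  have "inj_on z {..<m}"
  proof (rule inj_onI)
    fix i j assume "i \<in> {..<m}" "j \<in> {..<m}" "z i = z j"
    then show "i = j" using orth[of i i] orth[of i j] by (auto split: if_splits)
  qed
  then have reindex: "(\<Sum>b\<in>z ` {..<m}. f b) = (\<Sum>i<m. f (z i))" for f :: "'a \<Rightarrow> 'a"
    by (simp add: sum.reindex)
  show "z ` {..<m} \<subseteq> R" using z_R by auto
  fix r assume "r \<in> R"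
  define c where "c b = (if b \<in> z ` {..<m} then G (w (the_inv_into {..<m} z b) * r) else 0)" for b
  have c_z: "c (z j) = G (w j * r)" if "j < m" for j
    using \<open>inj_on z {..<m}\<close> that by (simp add: c_def the_inv_into_f_f)
  show "\<exists>!c. (\<forall>b. b \<notin> z ` {..<m} \<longrightarrow> c b = 0) \<and> (\<forall>b\<in>z ` {..<m}. c b \<in> S) \<and>
      r = (\<Sum>b\<in>z ` {..<m}. b * c b)"
  proof (rule ex1I[of _ c], intro conjI)
    show "\<forall>b. b \<notin> z ` {..<m} \<longrightarrow> c b = 0" by (simp add: c_def)
    show "\<forall>b\<in>z ` {..<m}. c b \<in> S"
      using c_z odb \<open>r \<in> R\<close> by (auto simp: odb_def intro!: G_in_S mult_R)
    show "r = (\<Sum>b\<in>z ` {..<m}. b * c b)"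
      using expansion[OF \<open>r \<in> R\<close>] by (simp add: reindex c_z)
  next
    fix c' assume c': "(\<forall>b. b \<notin> z ` {..<m} \<longrightarrow> c' b = 0) \<and> (\<forall>b\<in>z ` {..<m}. c' b \<in> S) \<and>
      r = (\<Sum>b\<in>z ` {..<m}. b * c' b)"
    show "c' = c"
    proof
      fix b show "c' b = c b"
      proof (cases "b \<in> z ` {..<m}")
        case True
        then obtain j where "j < m" "b = z j" by auto
        then have "c' b = G (w j * (\<Sum>i<m. z i * c' (z i)))"
          using odb_coeff[OF odb, of j "\<lambda>i. c' (z i)"] c' by simp
        also have "\<dots> = c b" using c' \<open>j < m\<close> \<open>b = z j\<close> by (simp add: reindex c_z)
        finally show ?thesis .
      qed (use c' in \<open>simp add: c_def\<close>)
    qed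
  qed
qed (use zero_S in simp_all)

lemma free_right_basis_dual_expansion:
  assumes basis: "free_right_basis S R B"
  obtains F wb where "finite F" "F \<subseteq> B" "\<And>b. wb b \<in> R"
    "\<And>r. r \<in> R \<Longrightarrow> (\<Sum>b\<in>F. b * G (wb b * r)) = r"
proof -
  have "\<forall>i\<in>{..<k}. \<exists>c. (\<forall>b. b \<notin> B \<longrightarrow> c b = 0) \<and> (\<forall>b\<in>B. c b \<in> S) \<and>
      finite {b\<in>B. c b \<noteq> 0} \<and> x i = (\<Sum>b\<in>{b\<in>B. c b \<noteq> 0}. b * c b)"
    using basis x_in_R unfolding free_right_basis_def by blast
  from bchoice[OF this] obtain cx
    where cx: "\<forall>i\<in>{..<k}. (\<forall>b. b \<notin> B \<longrightarrow> cx i b = 0) \<and> (\<forall>b\<in>B. cx i b \<in> S) \<and>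
      finite {b\<in>B. cx i b \<noteq> 0} \<and> x i = (\<Sum>b\<in>{b\<in>B. cx i b \<noteq> 0}. b * cx i b)"
    by blast
  define F where "F = (\<Union>i<k. {b\<in>B. cx i b \<noteq> 0})"
  define wb where "wb b = (\<Sum>i<k. cx i b * y i)" for b
  have cx_S: "cx i b \<in> S" if "i < k" for i b
    using cx that zero_S by (cases "b \<in> B") auto
  have x_F: "x i = (\<Sum>b\<in>F. b * cx i b)" if "i < k" for i
  proof -
    have "(\<Sum>b\<in>{b\<in>B. cx i b \<noteq> 0}. b * cx i b) = (\<Sum>b\<in>F. b * cx i b)"
      by (rule sum.mono_neutral_left) (use cx that in \<open>auto simp: F_def\<close>)
    then show ?thesis using cx that by auto
  qed
  have G_wb: "G (wb b * r) = (\<Sum>i<k. cx i b * G (y i * r))" if "r \<in> R" for b r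
  proof -
    have "G (wb b * r) = (\<Sum>i<k. G (cx i b * (y i * r)))"
      unfolding wb_def sum_distrib_right mult.assoc
      by (rule G_sum) (use that cx_S S_subset_R y_in_R in \<open>auto intro!: mult_R\<close>)
    also have "\<dots> = (\<Sum>i<k. cx i b * G (y i * r))"
      using that cx_S y_in_R by (simp add: G_mult_left mult_R)
    finally show ?thesis .
  qed
  show thesis
  proof
    show "finite F" using cx by (auto simp: F_def)
    show "F \<subseteq> B" by (auto simp: F_def)
    show "wb b \<in> R" for b
      unfolding wb_def by (rule subalg_sum[OF subalg_R]) (use cx_S S_subset_R y_in_R in \<open>auto intro!: mult_R\<close>)
    fix r assume "r \<in> R"
    have "(\<Sum>b\<in>F. b * G (wb b * r)) = (\<Sum>b\<in>F. \<Sum>i<k. b * (cx i b * G (y i * r)))"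
      by (simp add: G_wb \<open>r \<in> R\<close> sum_distrib_left)
    also have "\<dots> = (\<Sum>i<k. \<Sum>b\<in>F. b * (cx i b * G (y i * r)))" by (rule sum.swap)
    also have "\<dots> = (\<Sum>i<k. x i * G (y i * r))"
      by (simp add: x_F sum_distrib_right mult.assoc)
    also have "\<dots> = r" using sep_expansion_right \<open>r \<in> R\<close> by simp
    finally show "(\<Sum>b\<in>F. b * G (wb b * r)) = r" .
  qed
qed

lemma free_right_basis_dual_functionals:
  assumes basis: "free_right_basis S R B"
  obtains wb where "finite B" "\<And>b. wb b \<in> R" "\<And>r. r \<in> R \<Longrightarrow> (\<Sum>b\<in>B. b * G (wb b * r)) = r"
proof -
  obtain F wb where F: "finite F" "F \<subseteq> B" and wb_R: "\<And>b. wb b \<in> R"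
    and expansion: "\<And>r. r \<in> R \<Longrightarrow> (\<Sum>b\<in>F. b * G (wb b * r)) = r"
    using free_right_basis_dual_expansion[OF basis] by blast
  have "B \<subseteq> F"
  proof
    fix b assume "b \<in> B"
    then have "b \<in> R" using basis by (auto simp: free_right_basis_def)
    show "b \<in> F"
    proof (rule ccontr)
      assume "b \<notin> F"
      let ?c = "\<lambda>b'. if b' = b then 1 else 0"
      let ?d = "\<lambda>b'. if b' \<in> F then G (wb b' * b) else 0"
      have "(\<Sum>b'\<in>insert b F. b' * ?c b') = b"
        using F(1) by (simp add: if_distrib[of "\<lambda>t. _ * t"] cong: if_cong)
      moreover have "(\<Sum>b'\<in>insert b F. b' * ?d b') = b"
        using F(1) \<open>b \<notin> F\<close> expansion[OF \<open>b \<in> R\<close>] by simp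
      ultimately have "?c b = ?d b"
        using \<open>b \<in> B\<close> \<open>b \<in> R\<close> F zero_S one_S G_in_S mult_R wb_R
        by (intro free_right_basis_coeff_unique[OF basis zero_S, of "insert b F" ?c ?d b b]) auto
      then show False using \<open>b \<notin> F\<close> by simp
    qed
  qed
  with F have "F = B" by blast
  show thesis by (rule that) (use F(1) wb_R expansion \<open>F = B\<close> in auto)
qed

context
  fixes B :: "'a set" and wb :: "'a \<Rightarrow> 'a"
  assumes basis: "free_right_basis S R B" and finite_B: "finite B" and wb_R: "\<And>b. wb b \<in> R"
    and dual_expansion: "\<And>r. r \<in> R \<Longrightarrow> (\<Sum>b\<in>B. b * G (wb b * r)) = r"
begin

lemma basis_subset_R: "B \<subseteq> R"
  using basis by (simp add: free_right_basis_def)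

lemma dual_coeff:
  assumes c: "\<And>b. b \<in> B \<Longrightarrow> c b \<in> S" and "b' \<in> B"
  shows "G (wb b' * (\<Sum>b\<in>B. b * c b)) = c b'"
proof -
  let ?r = "\<Sum>b\<in>B. b * c b"
  have "?r \<in> R"
    using c basis_subset_R S_subset_R by (auto intro!: subalg_sum[OF subalg_R] mult_R)
  then show ?thesis
    using c \<open>b' \<in> B\<close> G_in_S mult_R wb_R dual_expansion[of ?r]
    by (intro free_right_basis_coeff_unique[OF basis zero_S finite_B subset_refl,
          of "\<lambda>b. G (wb b * ?r)" c ?r b']) auto
qed

lemma dual_orthogonal:
  assumes "b \<in> B" "b' \<in> B"
  shows "G (wb b * b') = (if b = b' then 1 else 0)"
proof -
  have "(\<Sum>b''\<in>B. b'' * (if b'' = b' then 1 else 0)) = b'"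
    using finite_B \<open>b' \<in> B\<close> by (simp add: if_distrib[of "\<lambda>t. _ * t"] cong: if_cong)
  moreover have "G (wb b * (\<Sum>b''\<in>B. b'' * (if b'' = b' then 1 else 0))) = (if b = b' then 1 else 0)"
    using zero_S one_S \<open>b \<in> B\<close> by (intro dual_coeff) auto
  ultimately show ?thesis by simp
qed

lemma dual_commute:
  assumes "t \<in> S" and commute: "\<And>b. b \<in> B \<Longrightarrow> b * t = t * b" and "b' \<in> B"
  shows "wb b' * t = t * wb b'"
proof (rule eq_if_G_mult_right_eq)
  have "t \<in> R" using \<open>t \<in> S\<close> S_subset_R by auto
  then show "wb b' * t \<in> R" "t * wb b' \<in> R" using wb_R mult_R by auto
  fix r assume "r \<in> R"
  have "(\<Sum>b\<in>B. b * (t * G (wb b * r))) = (\<Sum>b\<in>B. t * (b * G (wb b * r)))"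
    by (rule sum.cong) (simp_all add: commute mult.assoc[symmetric])
  also have "\<dots> = t * r" by (simp add: sum_distrib_left[symmetric] dual_expansion \<open>r \<in> R\<close>)
  finally have "G (wb b' * (t * r)) = t * G (wb b' * r)"
    using dual_coeff[of "\<lambda>b. t * G (wb b * r)" b'] \<open>t \<in> S\<close> \<open>r \<in> R\<close> \<open>b' \<in> B\<close>
    by (simp add: G_in_S mult_R mult_S wb_R)
  then show "G (wb b' * t * r) = G (t * wb b' * r)"
    using \<open>t \<in> S\<close> \<open>r \<in> R\<close> by (simp add: G_mult_left mult_R wb_R mult.assoc)
qed

lemma dual_expansion_right:
  assumes "a \<in> R"
  shows "(\<Sum>b\<in>B. G (a * b) * wb b) = a"
proof (rule eq_if_G_mult_right_eq)
  have G_ab: "G (a * b) \<in> S" if "b \<in> B" for b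
    using that \<open>a \<in> R\<close> basis_subset_R by (auto intro: G_in_S mult_R)
  then show "(\<Sum>b\<in>B. G (a * b) * wb b) \<in> R"
    using S_subset_R wb_R by (auto intro!: subalg_sum[OF subalg_R] mult_R)
  fix r assume "r \<in> R"
  have "G ((\<Sum>b\<in>B. G (a * b) * wb b) * r) = (\<Sum>b\<in>B. G (G (a * b) * (wb b * r)))"
    unfolding sum_distrib_right mult.assoc
    by (rule G_sum) (use G_ab S_subset_R wb_R \<open>r \<in> R\<close> in \<open>auto intro!: mult_R\<close>)
  also have "\<dots> = (\<Sum>b\<in>B. G (a * (b * G (wb b * r))))"
  proof (rule sum.cong[OF refl])
    fix b assume "b \<in> B"
    then have "a * b \<in> R" using \<open>a \<in> R\<close> basis_subset_R mult_R by auto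
    have "G (G (a * b) * (wb b * r)) = G (a * b) * G (wb b * r)"
      using G_ab[OF \<open>b \<in> B\<close>] \<open>r \<in> R\<close> wb_R by (simp add: G_mult_left mult_R)
    also have "\<dots> = G (a * b * G (wb b * r))"
      using \<open>a * b \<in> R\<close> \<open>r \<in> R\<close> wb_R by (simp add: G_mult_right G_in_S mult_R)
    finally show "G (G (a * b) * (wb b * r)) = G (a * (b * G (wb b * r)))"
      by (simp add: mult.assoc)
  qed
  also have "\<dots> = G (a * (\<Sum>b\<in>B. b * G (wb b * r)))"
    unfolding sum_distrib_left
    using \<open>a \<in> R\<close> \<open>r \<in> R\<close> basis_subset_R S_subset_R wb_R
    by (intro G_sum[symmetric]) (auto intro!: mult_R G_in_S)
  also have "\<dots> = G (a * r)" by (simp add: dual_expansion \<open>r \<in> R\<close>)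
  finally show "G ((\<Sum>b\<in>B. G (a * b) * wb b) * r) = G (a * r)" .
qed (rule assms)

end

lemma free_right_basis_imp_odb:
  assumes basis: "free_right_basis S R B" and "X \<subseteq> S" and central: "B \<subseteq> centr R X"
  shows "\<exists>m z w. odb R G m z w \<and> (\<forall>i<m. z i \<in> centr R X \<and> w i \<in> centr R X)"
proof -
  obtain wb where finite_B: "finite B" and wb_R: "\<And>b. wb b \<in> R"
    and expansion: "\<And>r. r \<in> R \<Longrightarrow> (\<Sum>b\<in>B. b * G (wb b * r)) = r"
    using free_right_basis_dual_functionals[OF basis] by blast
  note dual = basis finite_B wb_R expansion
  have wb_central: "wb b \<in> centr R X" if "b \<in> B" for b
    using dual_commute[OF dual _ _ that] \<open>X \<subseteq> S\<close> central wb_R by (auto simp: centr_def)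
  obtain h where h: "bij_betw h {..<card B} B" and odb: "odb R G (card B) h (\<lambda>i. wb (h i))"
    using odb_of_finite_family[of B R wb G] finite_B basis_subset_R[OF dual] wb_R
      dual_orthogonal[OF dual] expansion dual_expansion_right[OF dual] by blast
  have "h i \<in> B" if "i < card B" for i using h that by (auto simp: bij_betw_def)
  then show ?thesis using odb central wb_central by blast
qed

lemma free_right_basis_iff_odb:
  assumes "X \<subseteq> S"
  shows "(\<exists>B. free_right_basis S R B \<and> B \<subseteq> centr R X) \<longleftrightarrow>
    (\<exists>m z w. odb R G m z w \<and> (\<forall>i<m. z i \<in> centr R X \<and> w i \<in> centr R X))"
proof
  assume "\<exists>m z w. odb R G m z w \<and> (\<forall>i<m. z i \<in> centr R X \<and> w i \<in> centr R X)"
  then obtain m z w where "odb R G m z w" "\<forall>i<m. z i \<in> centr R X" by blast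
  then have "free_right_basis S R (z ` {..<m}) \<and> z ` {..<m} \<subseteq> centr R X"
    using odb_imp_free_right_basis by auto
  then show "\<exists>B. free_right_basis S R B \<and> B \<subseteq> centr R X" by blast
qed (use free_right_basis_imp_odb[OF _ assms] in blast)

end

lemma jones_tower_basic_constr:
  assumes "jones_tower sc lam N M E T EE"
  obtains \<mu> where "basic_constr sc lam (T j) (T (Suc j)) (EE j) (T (Suc (Suc j))) (EE (Suc j)) \<mu>"
  using assms by (auto simp: jones_tower_def)

lemma jones_tower_subalg:
  assumes tower: "jones_tower sc lam N M E T EE" and "subalg sc N" "subalg sc M"
  shows "subalg sc (T j)"
proof (cases j)
  case (Suc i)
  then show ?thesis
  proof (cases i)
    case (Suc l)
    obtain \<mu> where "basic_constr sc lam (T l) (T (Suc l)) (EE l) (T (Suc (Suc l))) (EE (Suc l)) \<mu>"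
      by (rule jones_tower_basic_constr[OF tower])
    with \<open>j = Suc i\<close> Suc show ?thesis by (simp add: basic_constr_def)
  qed (use tower \<open>j = Suc i\<close> \<open>subalg sc M\<close> in \<open>simp add: jones_tower_def\<close>)
qed (use tower \<open>subalg sc N\<close> in \<open>simp add: jones_tower_def\<close>)

lemma jones_tower_mono:
  assumes tower: "jones_tower sc lam N M E T EE" and "N \<subseteq> M" and "i \<le> j"
  shows "T i \<subseteq> T j"
proof (rule lift_Suc_mono_le[OF _ \<open>i \<le> j\<close>])
  fix l show "T l \<subseteq> T (Suc l)"
  proof (cases l)
    case (Suc l')
    obtain \<mu> where "basic_constr sc lam (T l') (T (Suc l')) (EE l') (T (Suc (Suc l'))) (EE (Suc l')) \<mu>"
      by (rule jones_tower_basic_constr[OF tower])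
    with Suc show ?thesis by (simp add: basic_constr_def)
  qed (use tower \<open>N \<subseteq> M\<close> in \<open>simp add: jones_tower_def\<close>)
qed

lemma jones_tower_separable_extension:
  assumes tower: "jones_tower sc lam N M E T EE" and "subalg sc N" "subalg sc M" "N \<subseteq> M"
  obtains k x y where "separable_extension sc (T j) (T (Suc j)) (EE j) lam k x y"
proof -
  obtain \<mu> where "basic_constr sc lam (T j) (T (Suc j)) (EE j) (T (Suc (Suc j))) (EE (Suc j)) \<mu>"
    by (rule jones_tower_basic_constr[OF tower])
  then obtain k x y where "sep_data sc (T j) (T (Suc j)) (EE j) lam k x y"
    by (auto simp: basic_constr_def)
  moreover have "subalg sc (T j)" "subalg sc (T (Suc j))" "T j \<subseteq> T (Suc j)"
    using jones_tower_subalg[OF tower] jones_tower_mono[OF tower] assms(2-4) by auto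
  ultimately show thesis by (intro that) (simp add: separable_extension_def)
qed

theorem lemma3p1:
  fixes sc :: "'k::field \<Rightarrow> 'a::ring_1 \<Rightarrow> 'a" and lam :: 'k
    and N M :: "'a set" and E :: "'a \<Rightarrow> 'a"
    and T :: "nat \<Rightarrow> 'a set" and EE :: "nat \<Rightarrow> 'a \<Rightarrow> 'a" and n :: nat
  assumes "kalg sc" and "subalg sc N" and "subalg sc M" and "N \<subseteq> M"
    and "centr M N = range (\<lambda>c. sc c 1)"
    and "\<exists>m x y. sep_data sc N M E lam m x y"
    and "jones_tower sc lam N M E T EE"
    and "n \<ge> 1"
  shows "((\<exists>B. free_right_basis (T (n - 1)) (T n) B \<and> B \<subseteq> centr (T n) N) \<longleftrightarrow>
          (\<exists>m z w. odb (T n) (EE (n - 1)) m z w \<and>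
             (\<forall>i<m. z i \<in> centr (T n) N \<and> w i \<in> centr (T n) N)))
       \<and> ((\<exists>B. free_right_basis (T n) (T (Suc n)) B \<and> B \<subseteq> centr (T (Suc n)) M) \<longleftrightarrow>
          (\<exists>m z w. odb (T (Suc n)) (EE n) m z w \<and>
             (\<forall>i<m. z i \<in> centr (T (Suc n)) M \<and> w i \<in> centr (T (Suc n)) M)))"
proof -
  note tower = \<open>jones_tower sc lam N M E T EE\<close>
  obtain j where n: "n = Suc j" using \<open>n \<ge> 1\<close> by (cases n) auto
  have "T 0 = N" "T (Suc 0) = M" using tower by (simp_all add: jones_tower_def)
  then have N_sub: "N \<subseteq> T j" and M_sub: "M \<subseteq> T n"
    using jones_tower_mono[OF tower \<open>N \<subseteq> M\<close>, of 0 j] jones_tower_mono[OF tower \<open>N \<subseteq> M\<close>, of 1 n]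
      \<open>n \<ge> 1\<close> by auto
  obtain k x y where lower: "separable_extension sc (T j) (T n) (EE j) lam k x y"
    using jones_tower_separable_extension[OF tower assms(2-4)] n by blast
  obtain k' x' y' where upper: "separable_extension sc (T n) (T (Suc n)) (EE n) lam k' x' y'"
    by (rule jones_tower_separable_extension[OF tower assms(2-4)])
  show ?thesis
    using separable_extension.free_right_basis_iff_odb[OF lower N_sub]
      separable_extension.free_right_basis_iff_odb[OF upper M_sub] n by simp
qed

end
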